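(* Let $n,m\ge 1$, $Q\in\mathbb{R}^{n\times n}$ symmetric positive definite, $A\in\mathbb{R}^{m\times n}$, $b\in\mathbb{R}^m$, $c\in\mathbb{R}^n$, and suppose the problem $$\min_{x\in\mathbb{R}^n}\ \tfrac12 x^\intercal Q x + c^\intercal x \quad\text{s.t.}\quad Ax\preceq b \qquad (P(Q,A,b,c))$$ is feasible, with (unique) optimal solution $x^\ast$. Let integers $0\le \bar m\le m$ and $0\le \bar n\le n$ be given and partition $$A=\begin{bmatrix} A_1\\ A_{21}\ \ A_{22}\end{bmatrix},\qquad A_1\in\mathbb{R}^{\bar m\times n},\ A_{21}\in\mathbb{R}^{(m-\bar m)\times \bar n},\ A_{22}\in\mathbb{R}^{(m-\bar m)\times(n-\bar n)}.$$ Consider an adversary (a coalition of the target node with some agents) that knows $Q$, $A$, $x^\ast$, the entries $b_1,\dots,b_{\bar m}$ and the entries $c_1,\dots,c_{\bar n}$. Then: (1) If $\bar m<m$ and there exists $\delta\in\mathbb{R}^{m-\bar m}$ with $\delta\neq 0$, $\delta\succeq 0$ and $A_{21}^\intercal\delta=0$, then $b$ cannot be uniquely retrieved by the adversary: there exist $b'\in\mathbb{R}^m$ with $b'\neq b$ and $c'\in\mathbb{R}^n$ such that $b'_j=b_j$ for all $j\le\bar m$, $c'_j=c_j$ for all $j\le \bar n$, and $x^\ast$ is the optimal solution of $P(Q,A,b',c')$. (2) If, in addition to the hypotheses of (1), $\bar n<n$ and $A_{22}^\intercal\delta\neq 0$, then $c$ cannot be uniquely retrieved by the adversary: there exist $c'\in\mathbb{R}^n$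 with $c'\neq c$ and $b'\in\mathbb{R}^m$ such that $b'_j=b_j$ for all $j\le\bar m$, $c'_j=c_j$ for all $j\le \bar n$, and $x^\ast$ is the optimal solution of $P(Q,A,b',c')$.
   Context: Vector inequalities $\preceq,\succeq$ are element-wise. The setting is a protocol that, given private data $b$ and $c$ held by agents and matrices $Q,A$ (here public), outputs the optimal solution $x^\ast$ of the quadratic program to a target node. Following the paper's notion of non-unique retrieval, a private input cannot be uniquely retrieved by an adversary if there are at least two values of it, each consistent (together with some values of the other unknown private data) with everything the adversary knows; here "consistent" means agreeing with the known entries and yielding the same optimal solution $x^\ast$. *)

theory Defs
  imports Complex_Main
begin

(* Vectors in R^k are functions nat => real, only indices 0..<k matter;
   matrices in R^(r x k) are functions nat => nat => real, entries (i,j) with i<r, j<k.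
   Indices are 0-based: the paper's entry j (1-based) is index j-1 here. *)

definition sym_pos_def_mat :: "nat \<Rightarrow> (nat \<Rightarrow> nat \<Rightarrow> real) \<Rightarrow> bool" where
  "sym_pos_def_mat n Q \<longleftrightarrow>
     (\<forall>i<n. \<forall>j<n. Q i j = Q j i) \<and>
     (\<forall>x::nat \<Rightarrow> real. (\<exists>i<n. x i \<noteq> 0) \<longrightarrow> (\<Sum>i<n. \<Sum>j<n. x i * Q i j * x j) > 0)"

definition qp_obj :: "nat \<Rightarrow> (nat \<Rightarrow> nat \<Rightarrow> real) \<Rightarrow> (nat \<Rightarrow> real) \<Rightarrow> (nat \<Rightarrow> real) \<Rightarrow> real" where
  "qp_obj n Q c x = (1/2) * (\<Sum>i<n. \<Sum>j<n. x i * Q i j * x j) + (\<Sum>i<n. c i * x i)"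

definition qp_feasible :: "nat \<Rightarrow> nat \<Rightarrow> (nat \<Rightarrow> nat \<Rightarrow> real) \<Rightarrow> (nat \<Rightarrow> real) \<Rightarrow> (nat \<Rightarrow> real) \<Rightarrow> bool" where
  "qp_feasible n m A b x \<longleftrightarrow> (\<forall>i<m. (\<Sum>j<n. A i j * x j) \<le> b i)"

definition qp_optimal :: "nat \<Rightarrow> nat \<Rightarrow> (nat \<Rightarrow> nat \<Rightarrow> real) \<Rightarrow> (nat \<Rightarrow> nat \<Rightarrow> real)
    \<Rightarrow> (nat \<Rightarrow> real) \<Rightarrow> (nat \<Rightarrow> real) \<Rightarrow> (nat \<Rightarrow> real) \<Rightarrow> bool" where
  "qp_optimal n m Q A b c x \<longleftrightarrow> qp_feasible n m A b x \<and>
     (\<forall>y. qp_feasible n m A b y \<longrightarrow> qp_obj n Q c x \<le> qp_obj n Q c y)"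

end

theory Submission
  imports Defs
begin

(* By the KKT conditions (necessary via Farkas' lemma, sufficient by convexity), x is optimal
   for P(Q,A,b,c) iff Q x + c + A^T l = 0 for some l >= 0 vanishing on the inactive constraints.
   Shifting l along the zero-padded delta changes c by a multiple of A^T delta, whose first
   nb entries vanish because A21^T delta = 0.  Shifting by -t delta with t maximal makes one
   multiplier in an unknown row zero, so that constraint's bound can be raised: b is not
   determined.  Shifting by +delta instead changes c by -A^T delta, which is nonzero exactly
   when A22^T delta is: c is not determined. *)

lemma farkas_lemma:
  fixes g :: "nat \<Rightarrow> real" and a :: "'i \<Rightarrow> nat \<Rightarrow> real"
  assumes "finite I"
    and "\<forall>w. (\<forall>i\<in>I. 0 \<le> (\<Sum>j<n. a i j * w j)) \<longrightarrow> 0 \<le> (\<Sum>j<n. g j * w j)"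
  shows "\<exists>l. (\<forall>i\<in>I. 0 \<le> l i) \<and> (\<forall>j<n. g j = (\<Sum>i\<in>I. l i * a i j))"
  using assms
proof (induction I arbitrary: g a rule: finite_induct)
  case empty
  then have "0 \<le> (\<Sum>j<n. g j * - g j)" by (metis empty_iff)
  then have "(\<Sum>j<n. (g j)\<^sup>2) = 0"
    by (simp add: sum_negf power2_eq_square antisym sum_nonneg)
  then show ?case by (simp add: sum_nonneg_eq_0_iff)
next
  case (insert k I)
  define dot where "dot u v = (\<Sum>j<n. u j * v j)" for u v :: "nat \<Rightarrow> real"
  have dot_diff_left: "dot (\<lambda>j. u j - s * v j) w = dot u w - s * dot v w" for u v w s
    unfolding dot_def by (simp add: algebra_simps sum_subtractf sum_distrib_left)
  have dot_diff_right: "dot u (\<lambda>j. w j - s * v j) = dot u w - s * dot u v" for u v w s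
    unfolding dot_def by (simp add: algebra_simps sum_subtractf sum_distrib_left)
  have hyp: "\<forall>w. (\<forall>i\<in>insert k I. 0 \<le> dot (a i) w) \<longrightarrow> 0 \<le> dot g w"
    using insert.prems unfolding dot_def .
  show ?case
  proof (cases "\<forall>w. (\<forall>i\<in>I. 0 \<le> dot (a i) w) \<longrightarrow> 0 \<le> dot g w")
    case True
    then obtain l where l: "\<forall>i\<in>I. 0 \<le> l i" "\<forall>j<n. g j = (\<Sum>i\<in>I. l i * a i j)"
      using insert.IH unfolding dot_def by blast
    have "(\<Sum>i\<in>I. (l(k := 0)) i * a i j) = (\<Sum>i\<in>I. l i * a i j)" for j
      using insert.hyps by (intro sum.cong) auto
    then show ?thesis
      using l insert.hyps by (intro exI[of _ "l(k := 0)"]) auto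
  next
    case False
    then obtain w0 where w0: "\<forall>i\<in>I. 0 \<le> dot (a i) w0" "dot g w0 < 0"
      by (auto simp: not_le)
    define \<alpha> where "\<alpha> = dot (a k) w0"
    have \<alpha>: "\<alpha> < 0"
      using hyp[rule_format, of w0] w0 unfolding \<alpha>_def by (force simp: not_less)
    \<comment> \<open>Project constraint k out along w0; the induction hypothesis applies to the rest.\<close>
    define aP where "aP i = (\<lambda>j. a i j - dot (a i) w0 / \<alpha> * a k j)" for i
    define gP where "gP = (\<lambda>j. g j - dot g w0 / \<alpha> * a k j)"
    have "\<forall>w. (\<forall>i\<in>I. 0 \<le> dot (aP i) w) \<longrightarrow> 0 \<le> dot gP w"
    proof (intro allI impI)
      fix w assume w: "\<forall>i\<in>I. 0 \<le> dot (aP i) w"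
      define w' where "w' = (\<lambda>j. w j - dot (a k) w / \<alpha> * w0 j)"
      have "dot (a i) w' = dot (aP i) w" for i
        unfolding w'_def aP_def dot_diff_left dot_diff_right by simp
      moreover have "dot (a k) w' = 0"
        using \<alpha> unfolding w'_def dot_diff_right \<alpha>_def by simp
      moreover have "dot g w' = dot gP w"
        unfolding w'_def gP_def dot_diff_left dot_diff_right by simp
      ultimately show "0 \<le> dot gP w"
        using hyp w by (metis insert_iff order_refl)
    qed
    then obtain \<mu> where \<mu>: "\<forall>i\<in>I. 0 \<le> \<mu> i" "\<forall>j<n. gP j = (\<Sum>i\<in>I. \<mu> i * aP i j)"
      using insert.IH unfolding dot_def by blast
    define S where "S = (\<Sum>i\<in>I. \<mu> i * dot (a i) w0)"
    have "0 \<le> S"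
      unfolding S_def using \<mu>(1) w0(1) by (auto intro!: sum_nonneg)
    define l where "l = \<mu>(k := (dot g w0 - S) / \<alpha>)"
    have "\<forall>i\<in>insert k I. 0 \<le> l i"
      using \<mu>(1) \<alpha> \<open>0 \<le> S\<close> w0(2) unfolding l_def by (auto simp: divide_nonpos_neg)
    moreover have "g j = (\<Sum>i\<in>insert k I. l i * a i j)" if "j < n" for j
    proof -
      have sum_l: "(\<Sum>i\<in>I. l i * a i j) = (\<Sum>i\<in>I. \<mu> i * a i j)"
        unfolding l_def using insert.hyps by (intro sum.cong) auto
      have "g j = gP j + dot g w0 / \<alpha> * a k j"
        unfolding gP_def by simp
      also have "\<dots> = (\<Sum>i\<in>I. \<mu> i * a i j) - S / \<alpha> * a k j + dot g w0 / \<alpha> * a k j"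
        using \<mu>(2) that unfolding aP_def S_def
        by (simp add: algebra_simps sum_subtractf sum_distrib_left sum_divide_distrib)
      also have "\<dots> = (\<Sum>i\<in>insert k I. l i * a i j)"
        using insert.hyps sum_l \<alpha> unfolding l_def by (simp add: field_simps)
      finally show ?thesis .
    qed
    ultimately show ?thesis by blast
  qed
qed

definition qp_grad :: "nat \<Rightarrow> (nat \<Rightarrow> nat \<Rightarrow> real) \<Rightarrow> (nat \<Rightarrow> real) \<Rightarrow> (nat \<Rightarrow> real) \<Rightarrow> nat \<Rightarrow> real"
  where "qp_grad n Q c x j = (\<Sum>k<n. Q j k * x k) + c j"

definition qp_kkt :: "nat \<Rightarrow> nat \<Rightarrow> (nat \<Rightarrow> nat \<Rightarrow> real) \<Rightarrow> (nat \<Rightarrow> nat \<Rightarrow> real)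
    \<Rightarrow> (nat \<Rightarrow> real) \<Rightarrow> (nat \<Rightarrow> real) \<Rightarrow> (nat \<Rightarrow> real) \<Rightarrow> (nat \<Rightarrow> real) \<Rightarrow> bool"
  where "qp_kkt n m Q A b c x l \<longleftrightarrow> qp_feasible n m A b x
     \<and> (\<forall>i<m. 0 \<le> l i \<and> (l i \<noteq> 0 \<longrightarrow> (\<Sum>j<n. A i j * x j) = b i))
     \<and> (\<forall>j<n. qp_grad n Q c x j + (\<Sum>i<m. l i * A i j) = 0)"

lemma sym_pos_def_mat_symmetric: "sym_pos_def_mat n Q \<Longrightarrow> \<forall>i<n. \<forall>j<n. Q i j = Q j i"
  unfolding sym_pos_def_mat_def by blast

lemma sym_pos_def_mat_quadratic_nonneg:
  assumes "sym_pos_def_mat n Q"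
  shows "0 \<le> (\<Sum>i<n. \<Sum>j<n. d i * Q i j * d j)"
proof (cases "\<exists>i<n. d i \<noteq> 0")
  case True
  then show ?thesis using assms unfolding sym_pos_def_mat_def by (simp add: less_imp_le)
qed simp

lemma qp_obj_along_line:
  assumes "\<forall>i<n. \<forall>j<n. Q i j = Q j i"
  shows "qp_obj n Q c (\<lambda>j. x j + t * d j) = qp_obj n Q c x + t * (\<Sum>j<n. qp_grad n Q c x j * d j)
           + t\<^sup>2 / 2 * (\<Sum>i<n. \<Sum>j<n. d i * Q i j * d j)"
proof -
  have cross: "(\<Sum>i<n. \<Sum>j<n. x i * Q i j * d j) = (\<Sum>i<n. \<Sum>j<n. d i * Q i j * x j)"
    by (subst sum.swap) (use assms in \<open>auto simp: mult.commute mult.left_commute intro!: sum.cong\<close>)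
  have grad: "(\<Sum>j<n. qp_grad n Q c x j * d j) = (\<Sum>i<n. \<Sum>j<n. d i * Q i j * x j) + (\<Sum>j<n. c j * d j)"
    unfolding qp_grad_def by (simp add: algebra_simps sum.distrib sum_distrib_left sum_distrib_right)
  have quad: "(\<Sum>i<n. \<Sum>j<n. (x i + t * d i) * Q i j * (x j + t * d j))
      = (\<Sum>i<n. \<Sum>j<n. x i * Q i j * x j) + t * (\<Sum>i<n. \<Sum>j<n. x i * Q i j * d j)
        + t * (\<Sum>i<n. \<Sum>j<n. d i * Q i j * x j) + t\<^sup>2 * (\<Sum>i<n. \<Sum>j<n. d i * Q i j * d j)"
    by (simp add: algebra_simps power2_eq_square sum.distrib sum_distrib_left)
  show ?thesis
    unfolding qp_obj_def grad quad cross
    by (simp add: algebra_simps sum.distrib sum_distrib_left)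
qed

lemma qp_kkt_imp_optimal:
  assumes Q: "sym_pos_def_mat n Q" and kkt: "qp_kkt n m Q A b c x l"
  shows "qp_optimal n m Q A b c x"
  unfolding qp_optimal_def
proof (intro conjI allI impI)
  show "qp_feasible n m A b x" using kkt unfolding qp_kkt_def by blast
next
  fix y assume "qp_feasible n m A b y"
  then have y: "\<forall>i<m. (\<Sum>j<n. A i j * y j) \<le> b i" unfolding qp_feasible_def .
  have l: "\<forall>i<m. 0 \<le> l i \<and> (l i \<noteq> 0 \<longrightarrow> (\<Sum>j<n. A i j * x j) = b i)"
    and grad: "\<forall>j<n. qp_grad n Q c x j = - (\<Sum>i<m. l i * A i j)"
    using kkt unfolding qp_kkt_def by (auto simp: eq_neg_iff_add_eq_0)
  define d where "d j = y j - x j" for j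
  have "(\<Sum>j<n. qp_grad n Q c x j * d j) = - (\<Sum>i<m. l i * (\<Sum>j<n. A i j * d j))"
    using grad by (simp add: sum_distrib_left sum_distrib_right mult.assoc sum_negf sum.swap[of _ "{..<m}"])
  also have "\<dots> = - (\<Sum>i<m. l i * ((\<Sum>j<n. A i j * y j) - b i))"
    using l unfolding d_def by (intro arg_cong[of _ _ uminus] sum.cong) (auto simp: algebra_simps sum_subtractf)
  also have "\<dots> \<ge> 0"
    using l y by (subst neg_0_le_iff_le, intro sum_nonpos) (simp add: mult_nonneg_nonpos)
  finally have "0 \<le> (\<Sum>j<n. qp_grad n Q c x j * d j)" .
  moreover have "y = (\<lambda>j. x j + 1 * d j)" unfolding d_def by simp
  ultimately show "qp_obj n Q c x \<le> qp_obj n Q c y"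
    using qp_obj_along_line[OF sym_pos_def_mat_symmetric[OF Q], of c x 1 d]
      sym_pos_def_mat_quadratic_nonneg[OF Q, of d] by simp
qed

lemma qp_optimal_imp_directional_nonneg:
  assumes sym: "\<forall>i<n. \<forall>j<n. Q i j = Q j i" and opt: "qp_optimal n m Q A b c x"
    and d: "\<forall>i<m. (\<Sum>j<n. A i j * x j) = b i \<longrightarrow> (\<Sum>j<n. A i j * d j) \<le> 0"
  shows "0 \<le> (\<Sum>j<n. qp_grad n Q c x j * d j)"
proof -
  define G where "G = (\<Sum>j<n. qp_grad n Q c x j * d j)"
  define D where "D = (\<Sum>i<n. \<Sum>j<n. d i * Q i j * d j)"
  have line: "(\<Sum>j<n. A i j * (x j + t * d j)) = (\<Sum>j<n. A i j * x j) + t * (\<Sum>j<n. A i j * d j)" for i t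
    by (simp add: algebra_simps sum.distrib sum_distrib_left)
  have "\<forall>\<^sub>F t in at_right 0. (\<Sum>j<n. A i j * (x j + t * d j)) \<le> b i" if "i < m" for i
  proof (cases "(\<Sum>j<n. A i j * x j) = b i")
    case True
    with d that have "(\<Sum>j<n. A i j * d j) \<le> 0" by blast
    then show ?thesis
      by (intro eventually_mono[OF eventually_at_right_less[of 0]]) (simp add: line True mult_nonneg_nonpos)
  next
    case False
    with opt that have slack: "(\<Sum>j<n. A i j * x j) < b i"
      unfolding qp_optimal_def qp_feasible_def by force
    have "((\<lambda>t. (\<Sum>j<n. A i j * x j) + t * (\<Sum>j<n. A i j * d j))
        \<longlongrightarrow> (\<Sum>j<n. A i j * x j)) (at_right 0)"
      by (auto intro!: tendsto_eq_intros)
    from order_tendstoD(2)[OF this slack] show ?thesis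
      unfolding line by (rule eventually_mono) simp
  qed
  then have "\<forall>\<^sub>F t in at_right 0. \<forall>i\<in>{..<m}. (\<Sum>j<n. A i j * (x j + t * d j)) \<le> b i"
    by (intro eventually_ball_finite) auto
  then have "\<forall>\<^sub>F t in at_right 0. qp_feasible n m A b (\<lambda>j. x j + t * d j)"
    unfolding qp_feasible_def by (rule eventually_mono) auto
  then have "\<forall>\<^sub>F t in at_right 0. 0 \<le> G + t / 2 * D"
    using eventually_at_right_less[of 0]
  proof eventually_elim
    case (elim t)
    with opt have "qp_obj n Q c x \<le> qp_obj n Q c (\<lambda>j. x j + t * d j)"
      unfolding qp_optimal_def by blast
    then have "0 \<le> t * (G + t / 2 * D)"
      unfolding qp_obj_along_line[OF sym] G_def D_def by (simp add: algebra_simps power2_eq_square)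
    then show ?case
      using \<open>0 < t\<close> by (simp add: zero_le_mult_iff)
  qed
  moreover have "((\<lambda>t. G + t / 2 * D) \<longlongrightarrow> G) (at_right 0)"
    by (auto intro!: tendsto_eq_intros)
  ultimately show ?thesis
    unfolding G_def by (intro tendsto_lowerbound) (auto simp: trivial_limit_at_right_real)
qed

lemma qp_optimal_imp_kkt:
  assumes sym: "\<forall>i<n. \<forall>j<n. Q i j = Q j i" and opt: "qp_optimal n m Q A b c x"
  obtains l where "qp_kkt n m Q A b c x l"
proof -
  define act where "act = {i \<in> {..<m}. (\<Sum>j<n. A i j * x j) = b i}"
  have "\<forall>w. (\<forall>i\<in>act. 0 \<le> (\<Sum>j<n. - A i j * w j)) \<longrightarrow> 0 \<le> (\<Sum>j<n. qp_grad n Q c x j * w j)"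
    using qp_optimal_imp_directional_nonneg[OF sym opt] unfolding act_def by (simp add: sum_negf)
  moreover have "finite act" unfolding act_def by simp
  ultimately obtain l where l: "\<forall>i\<in>act. 0 \<le> l i" "\<forall>j<n. qp_grad n Q c x j = (\<Sum>i\<in>act. l i * - A i j)"
    using farkas_lemma[where I = act and a = "\<lambda>i j. - A i j"] by blast
  define l' where "l' i = (if i \<in> act then l i else 0)" for i
  have "(\<Sum>i<m. l' i * A i j) = (\<Sum>i\<in>act. l i * A i j)" for j
    unfolding l'_def act_def sum.inter_filter[OF finite_lessThan] by (intro sum.cong) auto
  then have "qp_kkt n m Q A b c x l'"
    using opt l unfolding qp_kkt_def qp_optimal_def l'_def act_def by (auto simp: sum_negf)
  then show thesis ..
qed

lemma qp_kkt_change_multipliers: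
  assumes "qp_kkt n m Q A b c x l"
    and "qp_feasible n m A b' x"
    and "\<forall>i<m. 0 \<le> l' i \<and> (l' i \<noteq> 0 \<longrightarrow> (\<Sum>j<n. A i j * x j) = b' i)"
  shows "qp_kkt n m Q A b' (\<lambda>j. c j + (\<Sum>i<m. (l i - l' i) * A i j)) x l'"
  using assms unfolding qp_kkt_def qp_grad_def
  by (simp add: algebra_simps sum_subtractf)

lemma qp_kkt_release_constraint:
  assumes kkt: "qp_kkt n m Q A b c x l"
    and d: "\<forall>i<m. 0 \<le> d i" "\<exists>i<m. d i \<noteq> 0"
  obtains k t where "k < m" "d k \<noteq> 0"
    and "qp_kkt n m Q A (b(k := b k + 1)) (\<lambda>j. c j + t * (\<Sum>i<m. A i j * d i)) x (\<lambda>i. l i - t * d i)"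
proof -
  have l: "\<forall>i<m. 0 \<le> l i \<and> (l i \<noteq> 0 \<longrightarrow> (\<Sum>j<n. A i j * x j) = b i)"
    and fx: "qp_feasible n m A b x"
    using kkt unfolding qp_kkt_def by blast+
  define S where "S = {i. i < m \<and> d i \<noteq> 0}"
  have "finite S" "S \<noteq> {}" unfolding S_def using d(2) by auto
  then obtain k where "k \<in> S" and k_min: "\<forall>i\<in>S. l k / d k \<le> l i / d i"
    using ex_is_arg_min_if_finite[of S "\<lambda>i. l i / d i"] unfolding is_arg_min_linorder by blast
  then have k: "k < m" "0 < d k" unfolding S_def using d(1) by (auto simp: less_le)
  \<comment> \<open>The largest step keeping l - t d nonnegative; it zeroes the multiplier of constraint k.\<close>
  define t where "t = l k / d k"
  have "0 \<le> t" unfolding t_def using k l by simp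
  have l': "0 \<le> l i - t * d i \<and> (l i - t * d i \<noteq> 0 \<longrightarrow> (\<Sum>j<n. A i j * x j) = (b(k := b k + 1)) i)"
    if "i < m" for i
  proof (cases "i = k")
    case True
    then show ?thesis using k unfolding t_def by simp
  next
    case False
    have "t * d i \<le> l i"
    proof (cases "d i = 0")
      case False
      with that d(1) k_min have "0 < d i" "t \<le> l i / d i"
        unfolding S_def t_def by (auto simp: less_le)
      then show ?thesis by (simp add: le_divide_eq mult.commute)
    qed (use l that in simp)
    moreover have "l i \<noteq> 0" if "l i - t * d i \<noteq> 0"
      using that \<open>t * d i \<le> l i\<close> \<open>0 \<le> t\<close> d(1) \<open>i < m\<close> by (metis diff_zero mult_nonneg_nonneg order_antisym)
    ultimately show ?thesis using l that False by auto
  qed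
  have "qp_feasible n m A (b(k := b k + 1)) x"
    using fx unfolding qp_feasible_def by (auto simp: order_trans)
  with l' have "qp_kkt n m Q A (b(k := b k + 1))
      (\<lambda>j. c j + (\<Sum>i<m. (l i - (l i - t * d i)) * A i j)) x (\<lambda>i. l i - t * d i)"
    by (intro qp_kkt_change_multipliers[OF kkt]) auto
  moreover have "(\<lambda>j. c j + (\<Sum>i<m. (l i - (l i - t * d i)) * A i j))
      = (\<lambda>j. c j + t * (\<Sum>i<m. A i j * d i))"
    by (simp add: sum_distrib_left mult_ac)
  ultimately show thesis using k that by simp
qed

lemma qp_kkt_add_multipliers:
  assumes kkt: "qp_kkt n m Q A b c x l" and d: "\<forall>i<m. 0 \<le> d i"
  shows "qp_kkt n m Q A (\<lambda>i. if d i = 0 then b i else (\<Sum>j<n. A i j * x j))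
           (\<lambda>j. c j - (\<Sum>i<m. A i j * d i)) x (\<lambda>i. l i + d i)"
proof -
  have "qp_feasible n m A (\<lambda>i. if d i = 0 then b i else (\<Sum>j<n. A i j * x j)) x"
    using kkt unfolding qp_kkt_def qp_feasible_def by simp
  moreover have "\<forall>i<m. 0 \<le> l i + d i \<and> (l i + d i \<noteq> 0 \<longrightarrow>
      (\<Sum>j<n. A i j * x j) = (if d i = 0 then b i else (\<Sum>j<n. A i j * x j)))"
    using kkt d unfolding qp_kkt_def by auto
  ultimately have "qp_kkt n m Q A (\<lambda>i. if d i = 0 then b i else (\<Sum>j<n. A i j * x j))
      (\<lambda>j. c j + (\<Sum>i<m. (l i - (l i + d i)) * A i j)) x (\<lambda>i. l i + d i)"
    by (intro qp_kkt_change_multipliers[OF kkt]) auto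
  moreover have "(\<lambda>j. c j + (\<Sum>i<m. (l i - (l i + d i)) * A i j)) = (\<lambda>j. c j - (\<Sum>i<m. A i j * d i))"
    by (simp add: sum_negf mult_ac)
  ultimately show ?thesis by simp
qed

theorem proposition3:
  fixes n m mb nb :: nat
    and Q A :: "nat \<Rightarrow> nat \<Rightarrow> real"
    and b c xs \<delta> :: "nat \<Rightarrow> real"
  assumes "n \<ge> 1" and "m \<ge> 1"
    and "mb \<le> m" and "nb \<le> n"
    and "sym_pos_def_mat n Q"
    and "qp_optimal n m Q A b c xs"
    and "mb < m"
    and "\<exists>i\<in>{mb..<m}. \<delta> i \<noteq> 0"
    and "\<forall>i\<in>{mb..<m}. \<delta> i \<ge> 0"
    and "\<forall>j<nb. (\<Sum>i=mb..<m. A i j * \<delta> i) = 0"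
  shows "(\<exists>b' c'. (\<exists>i<m. b' i \<noteq> b i) \<and> (\<forall>i<mb. b' i = b i) \<and> (\<forall>j<nb. c' j = c j)
            \<and> qp_optimal n m Q A b' c' xs)
       \<and> ((nb < n \<and> (\<exists>j\<in>{nb..<n}. (\<Sum>i=mb..<m. A i j * \<delta> i) \<noteq> 0)) \<longrightarrow>
          (\<exists>c' b'. (\<exists>j<n. c' j \<noteq> c j) \<and> (\<forall>i<mb. b' i = b i) \<and> (\<forall>j<nb. c' j = c j)
            \<and> qp_optimal n m Q A b' c' xs))"
proof -
  note Q = assms(5)
  obtain l where kkt: "qp_kkt n m Q A b c xs l"
    using qp_optimal_imp_kkt[OF sym_pos_def_mat_symmetric[OF Q] assms(6)] .
  define d where "d i = (if i \<in> {mb..<m} then \<delta> i else 0)" for i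
  have d: "\<forall>i<m. 0 \<le> d i" "\<exists>i<m. d i \<noteq> 0" "\<forall>i<mb. d i = 0"
    using assms(8,9) unfolding d_def by auto
  have Ad: "(\<Sum>i<m. A i j * d i) = (\<Sum>i=mb..<m. A i j * \<delta> i)" for j
  proof -
    have "(\<Sum>i<m. A i j * d i) = (\<Sum>i\<in>{..<m} \<inter> {mb..<m}. A i j * \<delta> i)"
      unfolding d_def sum.inter_restrict[OF finite_lessThan] by (intro sum.cong) auto
    also have "{..<m} \<inter> {mb..<m} = {mb..<m}" by auto
    finally show ?thesis .
  qed
  obtain k t where "k < m" "d k \<noteq> 0"
    and "qp_kkt n m Q A (b(k := b k + 1)) (\<lambda>j. c j + t * (\<Sum>i<m. A i j * d i)) xs (\<lambda>i. l i - t * d i)"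
    using qp_kkt_release_constraint[OF kkt d(1,2)] .
  then have b_not_retrievable: "\<exists>b' c'. (\<exists>i<m. b' i \<noteq> b i) \<and> (\<forall>i<mb. b' i = b i)
      \<and> (\<forall>j<nb. c' j = c j) \<and> qp_optimal n m Q A b' c' xs"
    using d(3) assms(10) Ad qp_kkt_imp_optimal[OF Q]
    by (intro exI[of _ "b(k := b k + 1)"] exI[of _ "\<lambda>j. c j + t * (\<Sum>i<m. A i j * d i)"]) auto
  have "qp_kkt n m Q A (\<lambda>i. if d i = 0 then b i else (\<Sum>j<n. A i j * xs j))
      (\<lambda>j. c j - (\<Sum>i<m. A i j * d i)) xs (\<lambda>i. l i + d i)"
    using qp_kkt_add_multipliers[OF kkt d(1)] .
  then have c_not_retrievable: "\<exists>c' b'. (\<exists>j<n. c' j \<noteq> c j) \<and> (\<forall>i<mb. b' i = b i)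
      \<and> (\<forall>j<nb. c' j = c j) \<and> qp_optimal n m Q A b' c' xs"
    if "\<exists>j\<in>{nb..<n}. (\<Sum>i=mb..<m. A i j * \<delta> i) \<noteq> 0"
    using that d(3) assms(10) Ad qp_kkt_imp_optimal[OF Q]
    by (intro exI[of _ "\<lambda>j. c j - (\<Sum>i<m. A i j * d i)"]
        exI[of _ "\<lambda>i. if d i = 0 then b i else (\<Sum>j<n. A i j * xs j)"]) auto
  show ?thesis
    using b_not_retrievable c_not_retrievable by blast
qed

end
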